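(* Consider two firms $i\in\{1,2\}$ that simultaneously choose whether to enter a market ($y_i=1$) or not ($y_i=0$), where, when a lump-sum subsidy $\hat\tau\ge0$ is paid to any firm that enters, firm $i$'s profit is $y_i\big[\alpha+\hat\tau+\eta(1-y_{-i})-\mathbf e_i\big]$, with $(\alpha,\eta)\in\mathbb R^2$ and $\mathbf e=(\mathbf e_1,\mathbf e_2)\sim N(0,I_2)$ observed by both firms. Suppose firms behave according to strategic ambiguity aversion (SAA): each firm enters if entering is its unique rationalizable action, and does not enter otherwise (so behavior is rationalizable and no firm enters when both actions are rationalizable for it). Let $P(\hat\tau)$ be the probability (over $\mathbf e$) that neither firm enters. Then there exist a nonempty open set $\Xi\subseteq\mathbb R^2$ and a threshold $\bar\tau>0$ such that if $(\alpha,\eta)\in\Xi$ and $\hat\tau<\bar\tau$, then the probability that the market is not served is increasing in the size of the subsidy, i.e. $P$ is increasing on $[0,\bar\tau)$.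
   Context: Rationalizable actions are those surviving iterated elimination of strictly dominated strategies in the complete-information game with the profits given. *)

theory Defs
  imports "HOL-Probability.Probability"
begin

definition profit :: "real \<Rightarrow> real \<Rightarrow> real \<Rightarrow> real \<Rightarrow> nat \<Rightarrow> nat \<Rightarrow> real" where
  "profit \<alpha> \<eta> \<tau> ei yi yo = real yi * (\<alpha> + \<tau> + \<eta> * (1 - real yo) - ei)"

text \<open>Iterated elimination of strictly dominated strategies in a two-player game
  with action sets {0,1}; u1 a b is player 1's payoff when 1 plays a and 2 plays b,
  u2 a b is player 2's payoff when 2 plays a and 1 plays b.\<close>
fun iesds :: "(nat \<Rightarrow> nat \<Rightarrow> real) \<Rightarrow> (nat \<Rightarrow> nat \<Rightarrow> real) \<Rightarrow> nat \<Rightarrow> nat set \<times> nat set" where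
  "iesds u1 u2 0 = ({0, 1}, {0, 1})"
| "iesds u1 u2 (Suc k) =
     (let A = fst (iesds u1 u2 k); B = snd (iesds u1 u2 k) in
      ({a \<in> A. \<not> (\<exists>b\<in>A. \<forall>a'\<in>B. u1 b a' > u1 a a')},
       {a \<in> B. \<not> (\<exists>b\<in>B. \<forall>a'\<in>A. u2 b a' > u2 a a')}))"

definition rat1 :: "(nat \<Rightarrow> nat \<Rightarrow> real) \<Rightarrow> (nat \<Rightarrow> nat \<Rightarrow> real) \<Rightarrow> nat set" where
  "rat1 u1 u2 = (\<Inter>k. fst (iesds u1 u2 k))"

definition rat2 :: "(nat \<Rightarrow> nat \<Rightarrow> real) \<Rightarrow> (nat \<Rightarrow> nat \<Rightarrow> real) \<Rightarrow> nat set" where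
  "rat2 u1 u2 = (\<Inter>k. snd (iesds u1 u2 k))"

definition R1 :: "real \<Rightarrow> real \<Rightarrow> real \<Rightarrow> real \<times> real \<Rightarrow> nat set" where
  "R1 \<alpha> \<eta> \<tau> e = rat1 (profit \<alpha> \<eta> \<tau> (fst e)) (profit \<alpha> \<eta> \<tau> (snd e))"

definition R2 :: "real \<Rightarrow> real \<Rightarrow> real \<Rightarrow> real \<times> real \<Rightarrow> nat set" where
  "R2 \<alpha> \<eta> \<tau> e = rat2 (profit \<alpha> \<eta> \<tau> (fst e)) (profit \<alpha> \<eta> \<tau> (snd e))"

definition no_entry :: "real \<Rightarrow> real \<Rightarrow> real \<Rightarrow> real \<times> real \<Rightarrow> bool" where
  "no_entry \<alpha> \<eta> \<tau> e \<longleftrightarrow> R1 \<alpha> \<eta> \<tau> e \<noteq> {1} \<and> R2 \<alpha> \<eta> \<tau> e \<noteq> {1}"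

definition N2 :: "(real \<times> real) measure" where
  "N2 = density lborel std_normal_density \<Otimes>\<^sub>M density lborel std_normal_density"

definition P_none :: "real \<Rightarrow> real \<Rightarrow> real \<Rightarrow> real" where
  "P_none \<alpha> \<eta> \<tau> = measure N2 {e. no_entry \<alpha> \<eta> \<tau> e}"

end

theory Submission
  imports Defs
begin

(* For \<eta> > 0 put c = \<alpha> + \<tau> and d = c + \<eta>. A firm with shock e < c always enters, one with
   e > d never does, and in between it enters iff its rival stays out. Two rounds of elimination
   settle the game, and under SAA nobody enters iff both shocks lie in [d, \<infinity>) or both in [c, d];
   hence P = T\<^sup>2 + M\<^sup>2 with upper tail T = 1 - \<Phi> d and middle mass M = \<Phi> d - \<Phi> c.
   A subsidy shifts c and d to the right together, and dP/d\<tau> = 2 \<phi> d (M - T) - 2 M \<phi> c.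
   This is positive when c lies deep in the left tail (\<phi> c and \<Phi> c tiny) and d is moderately
   positive (T small, \<phi> d not too small). Chebyshev's inequality and the monotonicity of \<phi> in |x|
   make a discrete version of this work for \<alpha> \<in> (-5, -24/5), \<eta> \<in> (7, 36/5) and 0 \<le> \<tau> < 1/5. *)

lemma iesds_Suc_subset:
  "fst (iesds u1 u2 (Suc k)) \<subseteq> fst (iesds u1 u2 k)"
  "snd (iesds u1 u2 (Suc k)) \<subseteq> snd (iesds u1 u2 k)"
  by (auto simp: Let_def)

lemma iesds_antimono:
  assumes "j \<le> k"
  shows "fst (iesds u1 u2 k) \<subseteq> fst (iesds u1 u2 j) \<and> snd (iesds u1 u2 k) \<subseteq> snd (iesds u1 u2 j)"
  using assms
proof (induction k rule: dec_induct)
  case (step k)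
  then show ?case using iesds_Suc_subset[of u1 u2 k] by blast
qed simp

lemma iesds_stationary:
  assumes "iesds u1 u2 (Suc K) = iesds u1 u2 K" and "K \<le> k"
  shows "iesds u1 u2 k = iesds u1 u2 K"
  using assms(2)
proof (induction k rule: dec_induct)
  case (step k)
  then have "iesds u1 u2 (Suc k) = iesds u1 u2 (Suc K)"
    by (simp only: iesds.simps(2))
  then show ?case using assms(1) by simp
qed simp

lemma rat_eq_iesds_if_stationary:
  assumes "iesds u1 u2 (Suc K) = iesds u1 u2 K"
  shows "rat1 u1 u2 = fst (iesds u1 u2 K)" "rat2 u1 u2 = snd (iesds u1 u2 K)"
proof -
  have "fst (iesds u1 u2 K) \<subseteq> fst (iesds u1 u2 k) \<and> snd (iesds u1 u2 K) \<subseteq> snd (iesds u1 u2 k)" for k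
    using iesds_antimono[of k K u1 u2] iesds_stationary[OF assms, of k] by (cases "k \<le> K") auto
  then show "rat1 u1 u2 = fst (iesds u1 u2 K)" "rat2 u1 u2 = snd (iesds u1 u2 K)"
    unfolding rat1_def rat2_def by blast+
qed

(* Rationalizable actions of a player who gets 0 by staying out and p (q) by entering against an
   entering (inactive) rival; p' and q' are the rival's entry payoffs. *)
definition rat_entry :: "real \<Rightarrow> real \<Rightarrow> real \<Rightarrow> real \<Rightarrow> nat set" where
  "rat_entry p q p' q' =
     (if 0 < p then {1} else if q < 0 then {0}
      else if 0 < p' then (if p < 0 then {0} else {0, 1})
      else if q' < 0 then (if 0 < q then {1} else {0, 1})
      else {0, 1})"

context
  fixes u1 u2 :: "nat \<Rightarrow> nat \<Rightarrow> real"
  assumes out1: "\<And>y. u1 0 y = 0" and out2: "\<And>y. u2 0 y = 0"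
    and substitutes1: "u1 1 1 < u1 1 0" and substitutes2: "u2 1 1 < u2 1 0"
begin

lemma iesds_entry_1:
  "iesds u1 u2 1 =
     (if 0 < u1 1 1 then {1} else if u1 1 0 < 0 then {0} else {0, 1},
      if 0 < u2 1 1 then {1} else if u2 1 0 < 0 then {0} else {0, 1})"
  using out1 out2 substitutes1 substitutes2 by (auto simp: Let_def)

lemma iesds_entry_2:
  "iesds u1 u2 2 = (rat_entry (u1 1 1) (u1 1 0) (u2 1 1) (u2 1 0),
                    rat_entry (u2 1 1) (u2 1 0) (u1 1 1) (u1 1 0))"
  unfolding numeral_2_eq_2 iesds.simps(2)[of u1 u2 1] One_nat_def[symmetric] iesds_entry_1
  using out1 out2 substitutes1 substitutes2 by (auto simp: Let_def rat_entry_def)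

lemma iesds_entry_stationary: "iesds u1 u2 (Suc 2) = iesds u1 u2 2"
  unfolding iesds.simps(2)[of u1 u2 2] iesds_entry_2
  using out1 out2 substitutes1 substitutes2 by (auto simp: Let_def rat_entry_def)

lemma rat_entry_game:
  "rat1 u1 u2 = rat_entry (u1 1 1) (u1 1 0) (u2 1 1) (u2 1 0)"
  "rat2 u1 u2 = rat_entry (u2 1 1) (u2 1 0) (u1 1 1) (u1 1 0)"
  using rat_eq_iesds_if_stationary[OF iesds_entry_stationary] by (simp_all add: iesds_entry_2)

end

lemma no_entry_iff:
  assumes "\<eta> > 0"
  shows "no_entry \<alpha> \<eta> \<tau> e \<longleftrightarrow>
     e \<in> {\<alpha>+\<tau>+\<eta>..} \<times> {\<alpha>+\<tau>+\<eta>..} \<union> {\<alpha>+\<tau>..\<alpha>+\<tau>+\<eta>} \<times> {\<alpha>+\<tau>..\<alpha>+\<tau>+\<eta>}"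
proof -
  obtain e1 e2 where e: "e = (e1, e2)" by (cases e)
  let ?u = "profit \<alpha> \<eta> \<tau>"
  have game: "?u ei 0 y = 0" "?u ei 1 1 = \<alpha>+\<tau>-ei" "?u ei 1 0 = \<alpha>+\<tau>+\<eta>-ei" for ei y
    unfolding profit_def by simp_all
  then have "?u ei 1 1 < ?u ei 1 0" for ei using assms by simp
  note rat = rat_entry_game[of "?u e1" "?u e2", OF game(1) game(1) this this]
  have "R1 \<alpha> \<eta> \<tau> e = rat_entry (\<alpha>+\<tau>-e1) (\<alpha>+\<tau>+\<eta>-e1) (\<alpha>+\<tau>-e2) (\<alpha>+\<tau>+\<eta>-e2)"
    "R2 \<alpha> \<eta> \<tau> e = rat_entry (\<alpha>+\<tau>-e2) (\<alpha>+\<tau>+\<eta>-e2) (\<alpha>+\<tau>-e1) (\<alpha>+\<tau>+\<eta>-e1)"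
    unfolding R1_def R2_def e fst_conv snd_conv rat game by simp_all
  then show ?thesis
    unfolding no_entry_def e rat_entry_def using assms by auto
qed

definition std_normal :: "real measure" where
  "std_normal = density lborel std_normal_density"

lemma real_distribution_std_normal: "real_distribution std_normal"
  unfolding std_normal_def real_distribution_def real_distribution_axioms_def
  by (simp add: prob_space_normal_density)

interpretation std_normal: real_distribution std_normal
  by (rule real_distribution_std_normal)

lemma distributed_std_normal: "distributed std_normal lborel (\<lambda>x. x) std_normal_density"
  unfolding distributed_def std_normal_def by (simp add: distr_id2)

lemma N2_eq: "N2 = std_normal \<Otimes>\<^sub>M std_normal"
  unfolding N2_def std_normal_def ..

lemma prob_space_N2: "prob_space N2"
proof -
  interpret pair_prob_space std_normal std_normal by unfold_locales
  show ?thesis unfolding N2_eq by (rule P.prob_space_axioms)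
qed

interpretation N2: prob_space N2
  by (rule prob_space_N2)

lemma sets_N2: "sets N2 = sets (borel \<Otimes>\<^sub>M borel)"
  unfolding N2_eq by (intro sets_pair_measure_cong) auto

lemma measure_N2_Times:
  assumes "A \<in> sets borel" "B \<in> sets borel"
  shows "measure N2 (A \<times> B) = measure std_normal A * measure std_normal B"
proof -
  have "emeasure N2 (A \<times> B) = emeasure std_normal A * emeasure std_normal B"
    unfolding N2_eq using assms by (intro std_normal.emeasure_pair_measure_Times) auto
  then show ?thesis by (simp add: measure_def enn2real_mult)
qed

lemma null_sets_std_normal_singleton: "{x} \<in> null_sets std_normal"
proof -
  have "AE y in lborel. y \<in> {x} \<longrightarrow> std_normal_density y = 0"
    using AE_lborel_singleton[of x] by (rule eventually_mono) simp
  then show ?thesis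
    unfolding std_normal_def by (intro null_sets_density_iff[THEN iffD2] conjI) auto
qed

lemma measure_std_normal_singleton: "measure std_normal {x} = 0"
  using null_sets_std_normal_singleton by (simp add: measure_def null_setsD1)

lemma measure_std_normal_Icc:
  assumes "a \<le> b"
  shows "measure std_normal {a..b} = cdf std_normal b - cdf std_normal a"
proof -
  have "{a..b} = {a<..b} \<union> {a}" using assms by auto
  then have "measure std_normal {a..b} = measure std_normal {a<..b}"
    using null_sets_std_normal_singleton by (simp add: measure_Un_null_set del: Un_insert_right)
  also have "\<dots> = cdf std_normal b - cdf std_normal a"
    using assms std_normal.cdf_diff_eq[of a b] by (cases "a = b") auto
  finally show ?thesis .
qed

lemma measure_std_normal_Ici: "measure std_normal {a..} = 1 - cdf std_normal a"
proof -
  have "{a..} = (UNIV - {..a}) \<union> {a}" by auto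
  then have "measure std_normal {a..} = measure std_normal (UNIV - {..a})"
    using null_sets_std_normal_singleton by (simp add: measure_Un_null_set del: Un_insert_right)
  also have "\<dots> = 1 - cdf std_normal a"
    using std_normal.prob_compl[of "{..a}"] by (simp add: cdf_def)
  finally show ?thesis .
qed

lemma std_normal_tail_le:
  assumes "t > 0"
  shows "measure std_normal {x. t \<le> \<bar>x\<bar>} \<le> 1 / t\<^sup>2"
proof -
  have "integrable std_normal (\<lambda>x. x\<^sup>2)"
    using distributed_integrable[OF distributed_std_normal, of "\<lambda>x. x\<^sup>2"]
      integrable_std_normal_moment[of 2] by simp
  then show ?thesis
    using std_normal.Chebyshev_inequality[of "\<lambda>x. x" t] assms
      std_normal.standard_normal_distributed_expectation[OF distributed_std_normal]
      std_normal.standard_normal_distributed_variance[OF distributed_std_normal]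
    by simp
qed

lemma cdf_std_normal_le_inverse_square:
  assumes "c < 0"
  shows "cdf std_normal c \<le> 1 / c\<^sup>2"
proof -
  have "cdf std_normal c \<le> measure std_normal {x. -c \<le> \<bar>x\<bar>}"
    unfolding cdf_def using assms by (intro std_normal.finite_measure_mono) auto
  also have "\<dots> \<le> 1 / c\<^sup>2"
    using std_normal_tail_le[of "-c"] assms by simp
  finally show ?thesis .
qed

lemma one_minus_cdf_std_normal_le_inverse_square:
  assumes "d > 0"
  shows "1 - cdf std_normal d \<le> 1 / d\<^sup>2"
proof -
  have "1 - cdf std_normal d = measure std_normal {d..}"
    by (simp add: measure_std_normal_Ici)
  also have "\<dots> \<le> measure std_normal {x. d \<le> \<bar>x\<bar>}"
    using assms by (intro std_normal.finite_measure_mono) auto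
  also have "\<dots> \<le> 1 / d\<^sup>2"
    using std_normal_tail_le assms by simp
  finally show ?thesis .
qed

lemma std_normal_density_antimono: "y\<^sup>2 \<le> x\<^sup>2 \<Longrightarrow> std_normal_density x \<le> std_normal_density y"
  unfolding std_normal_density_def by (simp add: divide_right_mono)

lemma std_normal_density_ratio_lt:
  assumes "x\<^sup>2 + 14 \<le> y\<^sup>2"
  shows "std_normal_density y < 9/20 * std_normal_density x"
proof -
  have "exp (- (y\<^sup>2 / 2)) = exp (- (x\<^sup>2 / 2)) * exp (- ((y\<^sup>2 - x\<^sup>2) / 2))"
    by (simp add: exp_add[symmetric] field_simps)
  also have "exp (- ((y\<^sup>2 - x\<^sup>2) / 2)) \<le> exp (-7)"
    using assms by simp
  also have "exp (-7::real) < 9/20"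
  proof -
    have "(8::real) \<le> exp 7" using exp_ge_add_one_self[of 7] by simp
    then show ?thesis by (simp add: exp_minus field_simps)
  qed
  finally have "exp (- (y\<^sup>2 / 2)) / sqrt (2 * pi) < 9/20 * exp (- (x\<^sup>2 / 2)) / sqrt (2 * pi)"
    by (intro divide_strict_right_mono) auto
  then show ?thesis
    unfolding std_normal_density_def by simp
qed

lemma measure_std_normal_Ioc_ge:
  assumes "a \<le> b" "\<And>x. x \<in> {a<..b} \<Longrightarrow> m \<le> std_normal_density x"
  shows "m * (b - a) \<le> measure std_normal {a<..b}"
proof (cases "m \<le> 0")
  case False
  have "ennreal (m * (b - a)) = (\<integral>\<^sup>+ y. ennreal m * indicator {a<..b} y \<partial>lborel)"
    using assms False by (simp add: nn_integral_cmult_indicator ennreal_mult)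
  also have "\<dots> \<le> (\<integral>\<^sup>+ y. ennreal (std_normal_density y) * indicator {a<..b} y \<partial>lborel)"
    using assms by (intro nn_integral_mono) (auto split: split_indicator intro: ennreal_leI)
  also have "\<dots> = emeasure std_normal {a<..b}"
    unfolding std_normal_def by (rule emeasure_density[symmetric]) auto
  finally show ?thesis
    using std_normal.emeasure_eq_measure by (simp add: ennreal_le_iff)
qed (use assms in \<open>auto intro: order_trans[OF mult_nonpos_nonneg measure_nonneg]\<close>)

lemma measure_std_normal_Ioc_le:
  assumes "a \<le> b" "0 \<le> m" "\<And>x. x \<in> {a<..b} \<Longrightarrow> std_normal_density x \<le> m"
  shows "measure std_normal {a<..b} \<le> m * (b - a)"
proof -
  have "emeasure std_normal {a<..b} = (\<integral>\<^sup>+ y. ennreal (std_normal_density y) * indicator {a<..b} y \<partial>lborel)"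
    unfolding std_normal_def by (rule emeasure_density) auto
  also have "\<dots> \<le> (\<integral>\<^sup>+ y. ennreal m * indicator {a<..b} y \<partial>lborel)"
    using assms by (intro nn_integral_mono) (auto split: split_indicator intro: ennreal_leI)
  also have "\<dots> = ennreal m * ennreal (b - a)"
    using assms by (simp add: nn_integral_cmult_indicator)
  finally show ?thesis
    using std_normal.emeasure_eq_measure assms by (simp add: ennreal_le_iff ennreal_mult[symmetric])
qed

lemma P_none_eq:
  assumes "\<eta> > 0"
  shows "P_none \<alpha> \<eta> \<tau> = (1 - cdf std_normal (\<alpha>+\<tau>+\<eta>))\<^sup>2
                          + (cdf std_normal (\<alpha>+\<tau>+\<eta>) - cdf std_normal (\<alpha>+\<tau>))\<^sup>2"
proof -
  define c where "c = \<alpha>+\<tau>"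
  define d where "d = \<alpha>+\<tau>+\<eta>"
  have "c < d" using assms unfolding c_def d_def by simp
  define A where "A = {d..} \<times> {d..}"
  define B where "B = {c..d} \<times> {c..d}"
  have no_entry_set: "{e. no_entry \<alpha> \<eta> \<tau> e} = A \<union> B"
    using no_entry_iff[OF assms] unfolding A_def B_def c_def d_def by auto
  have fin: "A \<in> fmeasurable N2" "B \<in> fmeasurable N2"
    unfolding N2.fmeasurable_eq_sets sets_N2 A_def B_def by auto
  have "A \<inter> B = {d} \<times> {d}" unfolding A_def B_def using \<open>c < d\<close> by auto
  then have "measure N2 (A \<inter> B) = measure std_normal {d} * measure std_normal {d}"
    by (simp only: measure_N2_Times[of "{d}" "{d}"] closed_singleton borel_closed)
  then have "measure N2 (A \<inter> B) = 0"
    by (simp add: measure_std_normal_singleton)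
  moreover have "measure N2 A = (1 - cdf std_normal d)\<^sup>2"
    unfolding A_def by (simp add: measure_N2_Times measure_std_normal_Ici power2_eq_square)
  moreover have "measure N2 B = (cdf std_normal d - cdf std_normal c)\<^sup>2"
    unfolding B_def using \<open>c < d\<close> by (simp add: measure_N2_Times measure_std_normal_Icc power2_eq_square)
  ultimately show ?thesis
    unfolding P_none_def no_entry_set measure_Un3[OF fin] c_def d_def by simp
qed

(* After the shift, T - a and M + a - b are the new tail and middle mass, where a and b are the
   masses swept over at d and at c. *)
lemma sum_squares_shift_less:
  fixes T M a b :: real
  assumes "0 \<le> b" "M \<le> 1" "b < a * (M - T)"
  shows "T\<^sup>2 + M\<^sup>2 < (T - a)\<^sup>2 + (M + a - b)\<^sup>2"
proof -
  have "M * b \<le> b" using mult_right_mono[OF assms(2,1)] by simp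
  then have "0 < 2 * (a * (M - T) - M * b)" using assms(3) by simp
  moreover have "(T - a)\<^sup>2 + (M + a - b)\<^sup>2 = T\<^sup>2 + M\<^sup>2 + 2 * (a * (M - T) - M * b) + a\<^sup>2 + (a - b)\<^sup>2"
    by (simp add: power2_eq_square algebra_simps)
  ultimately show ?thesis
    using zero_le_power2[of a] zero_le_power2[of "a - b"] by linarith
qed

lemma cdf_std_normal_increment_less:
  assumes "c < c'" "c' \<le> 0" "0 \<le> d" and far: "(d + (c' - c))\<^sup>2 + 14 \<le> c'\<^sup>2"
  shows "cdf std_normal c' - cdf std_normal c
           < 9/20 * (cdf std_normal (d + (c' - c)) - cdf std_normal d)"
proof -
  define d' where "d' = d + (c' - c)"
  have "d < d'" using assms unfolding d'_def by simp
  have "cdf std_normal c' - cdf std_normal c \<le> std_normal_density c' * (c' - c)"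
    unfolding std_normal.cdf_diff_eq[OF \<open>c < c'\<close>]
  proof (rule measure_std_normal_Ioc_le)
    fix x assume "x \<in> {c<..c'}"
    then have "(-c')\<^sup>2 \<le> (-x)\<^sup>2" using assms by (intro power_mono) auto
    then show "std_normal_density x \<le> std_normal_density c'"
      by (intro std_normal_density_antimono) simp
  qed (use assms in auto)
  also have "\<dots> < 9/20 * std_normal_density d' * (c' - c)"
    using std_normal_density_ratio_lt[OF far[folded d'_def]] assms by simp
  also have "\<dots> = 9/20 * (std_normal_density d' * (d' - d))"
    unfolding d'_def by simp
  also have "\<dots> \<le> 9/20 * (cdf std_normal d' - cdf std_normal d)"
    unfolding std_normal.cdf_diff_eq[OF \<open>d < d'\<close>]
  proof (intro mult_left_mono measure_std_normal_Ioc_ge)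
    fix x assume "x \<in> {d<..d'}"
    then have "x\<^sup>2 \<le> d'\<^sup>2" using assms by (intro power_mono) auto
    then show "std_normal_density d' \<le> std_normal_density x"
      by (rule std_normal_density_antimono)
  qed (use \<open>d < d'\<close> in auto)
  finally show ?thesis unfolding d'_def .
qed

lemma cdf_std_normal_middle_mass_ge:
  assumes "c \<le> -23/5" "2 \<le> d"
  shows "9/20 \<le> (cdf std_normal d - cdf std_normal c) - (1 - cdf std_normal d)"
proof -
  have "(23/5)\<^sup>2 \<le> (-c)\<^sup>2" using assms by (intro power_mono) auto
  then have "1 / c\<^sup>2 \<le> 1 / (23/5)\<^sup>2" using assms by (intro divide_left_mono mult_pos_pos) auto
  then have "cdf std_normal c \<le> 1/20"
    using cdf_std_normal_le_inverse_square[of c] assms by (simp add: power2_eq_square)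
  moreover have "1 / d\<^sup>2 \<le> 1/4"
    using power_mono[of 2 d 2] assms by (simp add: field_simps)
  moreover have "1 - cdf std_normal d \<le> 1 / d\<^sup>2"
    using assms by (intro one_minus_cdf_std_normal_le_inverse_square) simp
  ultimately show ?thesis by linarith
qed

lemma no_entry_probability_strict_mono:
  assumes "7 < \<eta>" "\<eta> < 36/5"
  shows "strict_mono_on {-5<..<-23/5}
           (\<lambda>c. (1 - cdf std_normal (c + \<eta>))\<^sup>2 + (cdf std_normal (c + \<eta>) - cdf std_normal c)\<^sup>2)"
proof (rule strict_mono_onI)
  fix c c' :: real
  assume c: "c \<in> {-5<..<-23/5}" "c' \<in> {-5<..<-23/5}" "c < c'"
  define T where "T = 1 - cdf std_normal (c + \<eta>)"
  define M where "M = cdf std_normal (c + \<eta>) - cdf std_normal c"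
  define a where "a = cdf std_normal (c' + \<eta>) - cdf std_normal (c + \<eta>)"
  define b where "b = cdf std_normal c' - cdf std_normal c"
  have "(c' + \<eta>)\<^sup>2 \<le> (13/5)\<^sup>2" "(23/5)\<^sup>2 \<le> (-c')\<^sup>2"
    using c assms by (intro power_mono; simp)+
  then have "(c' + \<eta>)\<^sup>2 + 14 \<le> c'\<^sup>2" by (simp add: power_divide)
  moreover have shift: "c + \<eta> + (c' - c) = c' + \<eta>" by simp
  ultimately have "b < 9/20 * a"
    using cdf_std_normal_increment_less[of c c' "c + \<eta>", unfolded shift] c assms
    unfolding a_def b_def by simp
  moreover have "9/20 \<le> M - T"
    using cdf_std_normal_middle_mass_ge[of c "c + \<eta>"] c assms unfolding M_def T_def by simp
  moreover have "0 \<le> a" "0 \<le> b"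
    using c assms unfolding a_def b_def by (simp_all add: std_normal.cdf_nondecreasing)
  ultimately have "b < a * (M - T)"
    using mult_left_mono[of "9/20" "M - T" a] by linarith
  moreover have "M \<le> 1"
    unfolding M_def using std_normal.cdf_bounded_prob[of "c + \<eta>"] std_normal.cdf_nonneg[of c]
    by linarith
  ultimately have "T\<^sup>2 + M\<^sup>2 < (T - a)\<^sup>2 + (M + a - b)\<^sup>2"
    using \<open>0 \<le> b\<close> by (intro sum_squares_shift_less)
  then show "(1 - cdf std_normal (c + \<eta>))\<^sup>2 + (cdf std_normal (c + \<eta>) - cdf std_normal c)\<^sup>2
           < (1 - cdf std_normal (c' + \<eta>))\<^sup>2 + (cdf std_normal (c' + \<eta>) - cdf std_normal c')\<^sup>2"
    unfolding T_def M_def a_def b_def by (simp add: algebra_simps)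
qed

theorem proposition8:
  shows "\<exists>(\<Xi> :: (real \<times> real) set) \<tau>bar. open \<Xi> \<and> \<Xi> \<noteq> {} \<and> \<tau>bar > 0 \<and>
           (\<forall>\<alpha> \<eta>. (\<alpha>, \<eta>) \<in> \<Xi> \<longrightarrow> strict_mono_on {0..<\<tau>bar} (P_none \<alpha> \<eta>))"
proof (intro exI conjI allI impI)
  let ?\<Xi> = "{-5<..<-24/5::real} \<times> {7<..<36/5::real}"
  show "open ?\<Xi>" by (intro open_Times) auto
  show "?\<Xi> \<noteq> {}" by (auto intro!: exI[of _ "-49/10"] exI[of _ "71/10"])
  show "(1/5::real) > 0" by simp
  fix \<alpha> \<eta> assume "(\<alpha>, \<eta>) \<in> ?\<Xi>"
  then have \<alpha>: "-5 < \<alpha>" "\<alpha> < -24/5" and \<eta>: "7 < \<eta>" "\<eta> < 36/5" by auto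
  show "strict_mono_on {0..<1/5} (P_none \<alpha> \<eta>)"
  proof (rule strict_mono_onI)
    fix r s :: real assume "r \<in> {0..<1/5}" "s \<in> {0..<1/5}" "r < s"
    then have "\<alpha> + r \<in> {-5<..<-23/5}" "\<alpha> + s \<in> {-5<..<-23/5}" "\<alpha> + r < \<alpha> + s"
      using \<alpha> by auto
    then show "P_none \<alpha> \<eta> r < P_none \<alpha> \<eta> s"
      using strict_mono_onD[OF no_entry_probability_strict_mono[OF \<eta>]] \<eta>
      by (simp only: P_none_eq)
  qed
qed

end
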